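(* Let $\mathbf K$ be a commutative field, $p,q\in\mathbb N$ and $A\in\mathrm{Rec}_{p\times q}(\mathbf K)$. The following are equivalent: (i) the set $\{A[U,W]:(U,W)\in\mathcal M_{p\times q}\}\subset\mathbf K$ is finite; (ii) for every $B\in\overline{A}^{rec}$ the set $\{B[U,W]:(U,W)\in\mathcal M_{p\times q}\}$ is finite; (iii) the recursive set-closure $\{\rho(S,T)A:(S,T)\in\mathcal M_{p\times q}\}$ is finite; (iv) the shift-monoid of $A$, i.e. the set of restrictions of all shift maps $\rho(S,T)$, $(S,T)\in\mathcal M_{p\times q}$, to $\overline{A}^{rec}$, is finite.
   Context: $\mathcal M_{p\times q}$ is the monoid of pairs $(U,W)$ of words of common length with $U$ over $\{0,\dots,p-1\}$, $W$ over $\{0,\dots,q-1\}$, under concatenation. For $A:\mathcal M_{p\times q}\to\mathbf K$ (values $A[U,W]$), shift maps act by $(\rho(S,T)A)[U,W]=A[US,WT]$. $\overline{A}^{rec}$ is the linear span of $\{\rho(S,T)A\}$ (an invariant subspace for all shift maps), and $\mathrm{Rec}_{p\times q}(\mathbf K)$ is the set of $A$ with $\dim\overline{A}^{rec}<\infty$. *)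

theory Defs
  imports Main HOL.Vector_Spaces "HOL-Library.Function_Algebras" "HOL-Library.FuncSet"
begin

text \<open>Elements of the monoid M_{p x q}: pairs of words of common length, the first
over the alphabet {0..p-1}, the second over {0..q-1}. Concatenation is list append.\<close>
definition Mon :: "nat \<Rightarrow> nat \<Rightarrow> (nat list \<times> nat list) set" where
  "Mon p q = {(U, W). length U = length W \<and> set U \<subseteq> {..<p} \<and> set W \<subseteq> {..<q}}"

text \<open>Series A : M_{p x q} -> K are represented as functions on all pairs of lists
that vanish outside M_{p x q}.\<close>
type_synonym 'k series = "nat list \<Rightarrow> nat list \<Rightarrow> 'k"

definition is_series :: "nat \<Rightarrow> nat \<Rightarrow> 'k::zero series \<Rightarrow> bool" where
  "is_series p q A \<longleftrightarrow> (\<forall>U W. (U, W) \<notin> Mon p q \<longrightarrow> A U W = 0)"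

definition rho :: "nat \<Rightarrow> nat \<Rightarrow> nat list \<Rightarrow> nat list \<Rightarrow> 'k::zero series \<Rightarrow> 'k series" where
  "rho p q S T A = (\<lambda>U W. if (U, W) \<in> Mon p q then A (U @ S) (W @ T) else 0)"

definition scaleS :: "'k::field \<Rightarrow> 'k series \<Rightarrow> 'k series" where
  "scaleS c B = (\<lambda>U W. c * B U W)"

definition recClosure :: "nat \<Rightarrow> nat \<Rightarrow> 'k::field series \<Rightarrow> 'k series set" where
  "recClosure p q A = module.span scaleS {rho p q S T A | S T. (S, T) \<in> Mon p q}"

definition fin_dim :: "'k::field series set \<Rightarrow> bool" where
  "fin_dim V \<longleftrightarrow> (\<exists>B. finite B \<and> B \<subseteq> V \<and> V \<subseteq> module.span scaleS B)"

definition Rec :: "nat \<Rightarrow> nat \<Rightarrow> 'k::field series set" where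
  "Rec p q = {A. is_series p q A \<and> fin_dim (recClosure p q A)}"

end

theory Submission
  imports Defs
begin

text \<open>Finiteness of the coefficient set passes to every element of the span of the shifts,
since shifting only reads off coefficients of A. Conversely, a finite-dimensional space of
series is separated by finitely many coefficients, so a shift of A is determined by a
finite tuple of values of A; with finitely many values there are finitely many shifts.
Finally a shift map is linear, hence determined on the recursive closure by its action on
the finitely many shifts, which it maps into themselves.\<close>

definition coeffs :: "nat \<Rightarrow> nat \<Rightarrow> 'k series \<Rightarrow> 'k set" where
  "coeffs p q B = {B U W | U W. (U, W) \<in> Mon p q}"

definition shifts :: "nat \<Rightarrow> nat \<Rightarrow> 'k::zero series \<Rightarrow> 'k series set" where
  "shifts p q A = {rho p q S T A | S T. (S, T) \<in> Mon p q}"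

definition shift_monoid :: "nat \<Rightarrow> nat \<Rightarrow> 'k::field series \<Rightarrow> ('k series \<Rightarrow> 'k series) set" where
  "shift_monoid p q A = {(\<lambda>B \<in> recClosure p q A. rho p q S T B) | S T. (S, T) \<in> Mon p q}"

interpretation series: module "scaleS :: 'k::field \<Rightarrow> 'k series \<Rightarrow> 'k series"
  by unfold_locales (auto simp: scaleS_def fun_eq_iff algebra_simps)

lemma recClosure_eq_span_shifts: "recClosure p q A = series.span (shifts p q A)"
  by (simp add: recClosure_def shifts_def)

lemma shifts_subset_recClosure: "shifts p q A \<subseteq> recClosure p q A"
  unfolding recClosure_eq_span_shifts by (rule series.span_superset)

lemma Mon_Nil: "([], []) \<in> Mon p q"
  by (simp add: Mon_def)

lemma Mon_append: "(U, W) \<in> Mon p q \<Longrightarrow> (S, T) \<in> Mon p q \<Longrightarrow> (U @ S, W @ T) \<in> Mon p q"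
  by (auto simp: Mon_def)

lemma rho_Nil: "is_series p q A \<Longrightarrow> rho p q [] [] A = A"
  by (auto simp: rho_def fun_eq_iff is_series_def)

lemma rho_rho:
  "(S, T) \<in> Mon p q \<Longrightarrow> rho p q S T (rho p q S' T' A) = rho p q (S @ S') (T @ T') A"
  by (auto simp: rho_def fun_eq_iff Mon_append)

lemma rho_apply_Nil: "rho p q S T A [] [] = A S T"
  by (simp add: rho_def Mon_Nil)

lemma rho_eq_on_span:
  fixes G :: "'k::field series set"
  assumes "\<And>B. B \<in> G \<Longrightarrow> rho p q S T B = rho p q S' T' B" and "B \<in> series.span G"
  shows "rho p q S T B = rho p q S' T' B"
  using assms(2)
proof (induction rule: series.span_induct)
  case base
  show ?case
    by (auto simp: series.subspace_def rho_def scaleS_def fun_eq_iff)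
next
  case (step B)
  then show ?case by (rule assms(1))
qed

lemma coeffs_rho_subset: "coeffs p q (rho p q S T A) \<subseteq> coeffs p q A" if "(S, T) \<in> Mon p q"
  using Mon_append[OF _ that] by (fastforce simp: coeffs_def rho_def)

lemma rho_in_coeffs: "rho p q S T A U W \<in> insert 0 (coeffs p q A)" if "(S, T) \<in> Mon p q"
  using Mon_append[OF _ that] by (auto simp: rho_def coeffs_def)

lemma self_in_shifts: "is_series p q A \<Longrightarrow> A \<in> shifts p q A"
  unfolding shifts_def by (metis (mono_tags, lifting) Mon_Nil mem_Collect_eq rho_Nil)

lemma self_in_recClosure: "is_series p q A \<Longrightarrow> A \<in> recClosure p q (A :: 'k::field series)"
  using self_in_shifts shifts_subset_recClosure by blast

lemma rho_in_shifts:
  assumes "(S, T) \<in> Mon p q" and "B \<in> shifts p q A"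
  shows "rho p q S T B \<in> shifts p q A"
proof -
  obtain S' T' where ST': "(S', T') \<in> Mon p q" "B = rho p q S' T' A"
    using assms(2) by (auto simp: shifts_def)
  then have "rho p q S T B = rho p q (S @ S') (T @ T') A"
    using assms(1) by (simp add: rho_rho)
  moreover have "(S @ S', T @ T') \<in> Mon p q"
    using assms(1) ST'(1) by (rule Mon_append)
  ultimately show ?thesis
    unfolding shifts_def by blast
qed

lemma separating_coefficients_insert:
  fixes G :: "'k::field series set"
  assumes sep: "\<And>B. B \<in> series.span G \<Longrightarrow> (\<And>U W. (U, W) \<in> X \<Longrightarrow> B U W = 0) \<Longrightarrow> B = 0"
    and B0: "B0 \<in> series.span (insert g G)" "\<And>U W. (U, W) \<in> X \<Longrightarrow> B0 U W = 0" "B0 U0 W0 \<noteq> 0"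
    and B: "B \<in> series.span (insert g G)" "\<And>U W. (U, W) \<in> insert (U0, W0) X \<Longrightarrow> B U W = 0"
  shows "B = 0"
proof -
  obtain c0 where c0: "B0 - scaleS c0 g \<in> series.span G"
    using B0(1) series.span_insert by blast
  obtain c where c: "B - scaleS c g \<in> series.span G"
    using B(1) series.span_insert by blast
  \<comment> \<open>eliminating g between B and B0 leaves an element of span G vanishing on X\<close>
  have "scaleS c0 (B - scaleS c g) - scaleS c (B0 - scaleS c0 g) = scaleS c0 B - scaleS c B0"
    by (auto simp: fun_eq_iff scaleS_def algebra_simps)
  moreover have "scaleS c0 (B - scaleS c g) - scaleS c (B0 - scaleS c0 g) \<in> series.span G"
    by (intro series.span_diff series.span_scale c c0)
  moreover have "(scaleS c0 B - scaleS c B0) U W = 0" if "(U, W) \<in> X" for U W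
    using that B(2) B0(2) by (auto simp: scaleS_def)
  ultimately have "scaleS c0 B - scaleS c B0 = 0"
    using sep by metis
  then have "(scaleS c0 B - scaleS c B0) U0 W0 = 0"
    by simp
  then have "c * B0 U0 W0 = 0"
    using B(2)[of U0 W0] by (simp add: scaleS_def)
  with B0(3) have "c = 0" by simp
  moreover have "scaleS 0 g = 0"
    by (simp add: scaleS_def fun_eq_iff)
  ultimately have "B \<in> series.span G"
    using c by simp
  then show "B = 0" using sep B(2) by blast
qed

lemma span_separated_by_finite_coefficients:
  fixes G :: "'k::field series set"
  assumes "finite G"
  obtains X where "finite X"
    and "\<And>B. B \<in> series.span G \<Longrightarrow> (\<And>U W. (U, W) \<in> X \<Longrightarrow> B U W = 0) \<Longrightarrow> B = 0"
  using assms
proof (induction G arbitrary: thesis rule: finite_induct)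
  case empty
  show ?case by (rule empty.prems[of "{}"]) auto
next
  case (insert g G)
  obtain X where X: "finite X"
    "\<And>B. B \<in> series.span G \<Longrightarrow> (\<And>U W. (U, W) \<in> X \<Longrightarrow> B U W = 0) \<Longrightarrow> B = 0"
    using insert.IH by blast
  show ?case
  proof (cases "\<exists>B0 \<in> series.span (insert g G). (\<forall>U W. (U, W) \<in> X \<longrightarrow> B0 U W = 0) \<and> B0 \<noteq> 0")
    case False
    show ?thesis
    proof (rule insert.prems[OF X(1)])
      show "B = 0" if "B \<in> series.span (insert g G)" "\<And>U W. (U, W) \<in> X \<Longrightarrow> B U W = 0" for B
        using False that by blast
    qed
  next
    case True
    then obtain B0 U0 W0 where B0: "B0 \<in> series.span (insert g G)"
      "\<And>U W. (U, W) \<in> X \<Longrightarrow> B0 U W = 0" "B0 U0 W0 \<noteq> 0"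
      by (auto simp: fun_eq_iff)
    show ?thesis
    proof (rule insert.prems)
      show "finite (insert (U0, W0) X)"
        using X(1) by simp
      show "B = 0" if "B \<in> series.span (insert g G)"
        "\<And>U W. (U, W) \<in> insert (U0, W0) X \<Longrightarrow> B U W = 0" for B
        using X(2) B0 that by (rule separating_coefficients_insert)
    qed
  qed
qed

lemma subspace_finite_coeffs: "series.subspace {B :: 'k::field series. finite (coeffs p q B)}"
  unfolding series.subspace_def
proof (intro conjI ballI allI; clarify)
  have "coeffs p q (0 :: 'k series) \<subseteq> {0}"
    by (auto simp: coeffs_def)
  then show "finite (coeffs p q (0 :: 'k series))"
    using finite_subset by blast
next
  fix B C :: "'k series"
  assume "finite (coeffs p q B)" "finite (coeffs p q C)"
  moreover have "coeffs p q (B + C) \<subseteq> (\<lambda>(a, b). a + b) ` (coeffs p q B \<times> coeffs p q C)"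
    by (force simp: coeffs_def)
  ultimately show "finite (coeffs p q (B + C))"
    by (meson finite_SigmaI finite_imageI finite_subset)
next
  fix c and B :: "'k series"
  assume "finite (coeffs p q B)"
  moreover have "coeffs p q (scaleS c B) \<subseteq> (*) c ` coeffs p q B"
    by (force simp: coeffs_def scaleS_def)
  ultimately show "finite (coeffs p q (scaleS c B))"
    by (meson finite_imageI finite_subset)
qed

lemma finite_coeffs_recClosure:
  assumes "finite (coeffs p q A)" and "B \<in> recClosure p q A"
  shows "finite (coeffs p q B)"
  using assms(2) unfolding recClosure_eq_span_shifts
proof (induction rule: series.span_induct)
  case base
  show ?case by (rule subspace_finite_coeffs)
next
  case (step B)
  then obtain S T where "(S, T) \<in> Mon p q" "B = rho p q S T A"
    by (auto simp: shifts_def)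
  then show ?case
    using assms(1) coeffs_rho_subset finite_subset by metis
qed

lemma finite_coeffs_if_finite_shifts:
  assumes "finite (shifts p q A)"
  shows "finite (coeffs p q A)"
proof -
  have "coeffs p q A \<subseteq> (\<lambda>B. B [] []) ` shifts p q A"
  proof
    fix a assume "a \<in> coeffs p q A"
    then obtain U W where "(U, W) \<in> Mon p q" "a = rho p q U W A [] []"
      by (auto simp: coeffs_def rho_apply_Nil)
    moreover from this have "rho p q U W A \<in> shifts p q A"
      by (auto simp: shifts_def)
    ultimately show "a \<in> (\<lambda>B. B [] []) ` shifts p q A"
      by simp
  qed
  then show ?thesis using assms finite_subset by blast
qed

lemma finite_shifts_if_finite_coeffs:
  fixes A :: "'k::field series"
  assumes "fin_dim (recClosure p q A)" and "finite (coeffs p q A)"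
  shows "finite (shifts p q A)"
proof -
  obtain G where G: "finite G" "recClosure p q A \<subseteq> series.span G"
    using assms(1) by (auto simp: fin_dim_def)
  obtain X where X: "finite X"
    "\<And>B. B \<in> series.span G \<Longrightarrow> (\<And>U W. (U, W) \<in> X \<Longrightarrow> B U W = 0) \<Longrightarrow> B = 0"
    using span_separated_by_finite_coefficients[OF G(1)] by blast
  define restr where "restr B = (\<lambda>(U, W) \<in> X. B U W)" for B :: "'k series"
  have "inj_on restr (shifts p q A)"
  proof (rule inj_onI)
    fix B C assume "B \<in> shifts p q A" "C \<in> shifts p q A" and eq: "restr B = restr C"
    then have "B - C \<in> series.span G"
      using G(2) shifts_subset_recClosure[of p q A] by (blast intro: series.span_diff)
    moreover have "(B - C) U W = 0" if "(U, W) \<in> X" for U W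
      using fun_cong[OF eq, of "(U, W)"] that by (simp add: restr_def)
    ultimately have "B - C = 0"
      by (rule X(2))
    then show "B = C" by simp
  qed
  moreover have "restr B \<in> X \<rightarrow>\<^sub>E insert 0 (coeffs p q A)" if B: "B \<in> shifts p q A" for B
  proof -
    obtain S T where ST: "(S, T) \<in> Mon p q" "B = rho p q S T A"
      using B by (auto simp: shifts_def)
    show ?thesis
      using rho_in_coeffs[OF ST(1)] by (auto simp: restr_def ST(2))
  qed
  moreover have "finite (X \<rightarrow>\<^sub>E insert 0 (coeffs p q A))"
    using X(1) assms(2) by (simp add: finite_PiE)
  ultimately show ?thesis by (blast intro: inj_on_finite)
qed

lemma finite_shift_monoid_if_finite_shifts:
  fixes A :: "'k::field series"
  assumes "finite (shifts p q A)"
  shows "finite (shift_monoid p q A)"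
proof -
  define restr where "restr F = (\<lambda>B \<in> shifts p q A. F B)" for F :: "'k series \<Rightarrow> 'k series"
  have "inj_on restr (shift_monoid p q A)"
  proof (rule inj_onI)
    fix F F' assume "F \<in> shift_monoid p q A" "F' \<in> shift_monoid p q A" and eq: "restr F = restr F'"
    then obtain S T S' T' where F: "F = (\<lambda>B \<in> recClosure p q A. rho p q S T B)"
      and F': "F' = (\<lambda>B \<in> recClosure p q A. rho p q S' T' B)"
      by (auto simp: shift_monoid_def)
    have "rho p q S T B = rho p q S' T' B" if "B \<in> shifts p q A" for B
      using fun_cong[OF eq, of B] that shifts_subset_recClosure[of p q A]
      by (auto simp: restr_def F F')
    then have "rho p q S T B = rho p q S' T' B" if "B \<in> recClosure p q A" for B
      using that unfolding recClosure_eq_span_shifts by (rule rho_eq_on_span)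
    then show "F = F'" by (auto simp: F F')
  qed
  moreover have "restr F \<in> shifts p q A \<rightarrow>\<^sub>E shifts p q A" if F: "F \<in> shift_monoid p q A" for F
  proof -
    obtain S T where ST: "(S, T) \<in> Mon p q" "F = (\<lambda>B \<in> recClosure p q A. rho p q S T B)"
      using F by (auto simp: shift_monoid_def)
    have "B \<in> recClosure p q A" "rho p q S T B \<in> shifts p q A" if "B \<in> shifts p q A" for B
      using that rho_in_shifts[OF ST(1)] shifts_subset_recClosure by blast+
    then show ?thesis
      by (auto simp: restr_def ST(2))
  qed
  moreover have "finite (shifts p q A \<rightarrow>\<^sub>E shifts p q A)"
    using assms by (simp add: finite_PiE)
  ultimately show ?thesis by (blast intro: inj_on_finite)
qed

lemma finite_shifts_if_finite_shift_monoid: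
  assumes "is_series p q A" and "finite (shift_monoid p q A)"
  shows "finite (shifts p q A)"
proof -
  have "A \<in> recClosure p q A"
    using assms(1) by (rule self_in_recClosure)
  then have "rho p q S T A \<in> (\<lambda>F. F A) ` shift_monoid p q A" if "(S, T) \<in> Mon p q" for S T
    using that unfolding shift_monoid_def
    by (intro image_eqI[of _ _ "\<lambda>B \<in> recClosure p q A. rho p q S T B"]) auto
  then have "shifts p q A \<subseteq> (\<lambda>F. F A) ` shift_monoid p q A"
    by (auto simp: shifts_def)
  then show ?thesis using assms(2) finite_subset by blast
qed

theorem mainTheorem16:
  fixes A :: "'k::field series" and p q :: nat
  assumes "A \<in> Rec p q"
  shows "(finite {A U W | U W. (U, W) \<in> Mon p q}
            \<longleftrightarrow> (\<forall>B \<in> recClosure p q A. finite {B U W | U W. (U, W) \<in> Mon p q}))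
       \<and> (finite {A U W | U W. (U, W) \<in> Mon p q}
            \<longleftrightarrow> finite {rho p q S T A | S T. (S, T) \<in> Mon p q})
       \<and> (finite {A U W | U W. (U, W) \<in> Mon p q}
            \<longleftrightarrow> finite {(\<lambda>B \<in> recClosure p q A. rho p q S T B) | S T. (S, T) \<in> Mon p q})"
proof -
  have series: "is_series p q A" and fin_dim: "fin_dim (recClosure p q A)"
    using assms by (auto simp: Rec_def)
  have "A \<in> recClosure p q A"
    using series by (rule self_in_recClosure)
  then have "finite (coeffs p q A) \<longleftrightarrow> (\<forall>B \<in> recClosure p q A. finite (coeffs p q B))"
    using finite_coeffs_recClosure by blast
  moreover have "finite (coeffs p q A) \<longleftrightarrow> finite (shifts p q A)"
    using finite_coeffs_if_finite_shifts finite_shifts_if_finite_coeffs fin_dim by blast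
  moreover have "finite (shifts p q A) \<longleftrightarrow> finite (shift_monoid p q A)"
    using finite_shift_monoid_if_finite_shifts finite_shifts_if_finite_shift_monoid series by blast
  ultimately show ?thesis
    unfolding coeffs_def shifts_def shift_monoid_def by blast
qed

end
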